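(* Let $X$ be a reflexive complex Banach space, let $D\subseteq X$ be a dense linear subspace, and let $t:D\times D\to\mathbb{C}$ be a sesquilinear form (linear in the first variable, conjugate linear in the second) such that $t(x,x)\ge\gamma\|x\|^2$ for all $x\in D$ with some constant $\gamma>0$, and such that $D$ equipped with the inner product $t(\cdot,\cdot)$ is complete (a Hilbert space). Define the operator $A$ from $X$ to $X^\ast$ as follows: $\operatorname{dom}A$ is the set of those $x\in D$ for which the functional $y\mapsto t(x,y)$ is continuous on $D$ with respect to the norm of $X$, and for such $x$, $Ax$ is the unique $z\in X^\ast$ with $(z,y)=t(x,y)$ for all $y\in D$. Then $A$ is a positive, self-adjoint operator from $X$ to $X^\ast$.
   Context: $X^\ast$ denotes the conjugate dual of $X$: the space of all continuous conjugate-linear functionals on $X$; $X$ is identified with $X^{\ast\ast}$ via reflexivity. For $v\in X^\ast$, $x\in X$ write $(v,x):=v(x)$ and $(x,v):=\overline{v(x)}$. For a densely defined linear operator $A$ from $X$ to $X^\ast$: $A$ is positive if $(Ax,x)\ge 0$ for all $x\in\operatorname{dom}A$; the adjoint $A^\ast$ is the operator from $X$ to $X^\ast$ with $\operatorname{dom}A^\ast=\{y\in X: x\mapsto (Ax,y)\text{ is continuous on }\operatorname{dom}A\text{ in the norm of }X\}$ and $A^\ast y$ the unique element of $X^\ast$ with $(x,A^\ast y)=(Ax,y)$ for all $x\in\operatorname{dom}A$; $A$ is self-adjoint if $A=A^\ast$. *)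

theory Defs
  imports "HOL-Analysis.Analysis"
begin

text \<open>HOL-Analysis has no complex vector spaces; we introduce the class of complex normed
  vector spaces: real normed spaces with a compatible complex scalar multiplication.\<close>
class cnormed_vector = real_normed_vector +
  fixes scaleC :: "complex \<Rightarrow> 'a \<Rightarrow> 'a" (infixr \<open>*\<^sub>C\<close> 75)
  assumes scaleC_add_right: "a *\<^sub>C (x + y) = a *\<^sub>C x + a *\<^sub>C y"
    and scaleC_add_left: "(a + b) *\<^sub>C x = a *\<^sub>C x + b *\<^sub>C x"
    and scaleC_scaleC: "a *\<^sub>C (b *\<^sub>C x) = (a * b) *\<^sub>C x"
    and scaleC_one: "1 *\<^sub>C x = x"
    and scaleR_scaleC: "r *\<^sub>R x = complex_of_real r *\<^sub>C x"
    and norm_scaleC: "norm (a *\<^sub>C x) = cmod a * norm x"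

definition conj_linear :: "('a::cnormed_vector \<Rightarrow> complex) \<Rightarrow> bool" where
  "conj_linear f \<longleftrightarrow> (\<forall>x y. f (x + y) = f x + f y) \<and> (\<forall>c x. f (c *\<^sub>C x) = cnj c * f x)"

text \<open>The conjugate dual X*: continuous conjugate-linear functionals on X.\<close>
definition cdual :: "('a::cnormed_vector \<Rightarrow> complex) set" where
  "cdual = {f. conj_linear f \<and> continuous_on UNIV f}"

text \<open>Reflexivity: every bounded conjugate-linear functional on X* (normed by the operator
  norm) is of the form v \<mapsto> (x,v) = cnj (v x) for some x in X.\<close>
definition reflexive_space :: "'a::cnormed_vector itself \<Rightarrow> bool" where
  "reflexive_space _ \<longleftrightarrow>
     (\<forall>\<Phi> :: ('a \<Rightarrow> complex) \<Rightarrow> complex.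
        (\<forall>v\<in>cdual. \<forall>w\<in>cdual. \<Phi> (\<lambda>x. v x + w x) = \<Phi> v + \<Phi> w) \<and>
        (\<forall>c. \<forall>v\<in>cdual. \<Phi> (\<lambda>x. c * v x) = cnj c * \<Phi> v) \<and>
        (\<exists>K. \<forall>v\<in>cdual. norm (\<Phi> v) \<le> K * onorm v)
        \<longrightarrow> (\<exists>x::'a. \<forall>v\<in>cdual. \<Phi> v = cnj (v x)))"

definition complex_subspace :: "'a::cnormed_vector set \<Rightarrow> bool" where
  "complex_subspace S \<longleftrightarrow> 0 \<in> S \<and> (\<forall>x\<in>S. \<forall>y\<in>S. x + y \<in> S) \<and> (\<forall>c. \<forall>x\<in>S. c *\<^sub>C x \<in> S)"

definition sesquilinear_on :: "'a::cnormed_vector set \<Rightarrow> ('a \<Rightarrow> 'a \<Rightarrow> complex) \<Rightarrow> bool" where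
  "sesquilinear_on D t \<longleftrightarrow>
     (\<forall>x\<in>D. \<forall>x'\<in>D. \<forall>y\<in>D. t (x + x') y = t x y + t x' y) \<and>
     (\<forall>c. \<forall>x\<in>D. \<forall>y\<in>D. t (c *\<^sub>C x) y = c * t x y) \<and>
     (\<forall>x\<in>D. \<forall>y\<in>D. \<forall>y'\<in>D. t x (y + y') = t x y + t x y') \<and>
     (\<forall>c. \<forall>x\<in>D. \<forall>y\<in>D. t x (c *\<^sub>C y) = cnj c * t x y)"

definition form_complete :: "'a::cnormed_vector set \<Rightarrow> ('a \<Rightarrow> 'a \<Rightarrow> complex) \<Rightarrow> bool" where
  "form_complete D t \<longleftrightarrow>
     (\<forall>u :: nat \<Rightarrow> 'a. (\<forall>n. u n \<in> D) \<and>
        (\<forall>e>0. \<exists>N. \<forall>m\<ge>N. \<forall>n\<ge>N. sqrt (Re (t (u m - u n) (u m - u n))) < e)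
        \<longrightarrow> (\<exists>x\<in>D. (\<lambda>n. sqrt (Re (t (u n - x) (u n - x)))) \<longlonglongrightarrow> 0))"

definition form_dom :: "'a::cnormed_vector set \<Rightarrow> ('a \<Rightarrow> 'a \<Rightarrow> complex) \<Rightarrow> 'a set" where
  "form_dom D t = {x \<in> D. continuous_on D (\<lambda>y. t x y)}"

definition form_op :: "'a::cnormed_vector set \<Rightarrow> ('a \<Rightarrow> 'a \<Rightarrow> complex) \<Rightarrow> 'a \<Rightarrow> ('a \<Rightarrow> complex)" where
  "form_op D t x = (THE z. z \<in> cdual \<and> (\<forall>y\<in>D. z y = t x y))"

definition dd_operator :: "'a::cnormed_vector set \<Rightarrow> ('a \<Rightarrow> ('a \<Rightarrow> complex)) \<Rightarrow> bool" where
  "dd_operator Dm A \<longleftrightarrow> complex_subspace Dm \<and> closure Dm = UNIV \<and>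
     (\<forall>x\<in>Dm. A x \<in> cdual) \<and>
     (\<forall>x\<in>Dm. \<forall>y\<in>Dm. A (x + y) = (\<lambda>z. A x z + A y z)) \<and>
     (\<forall>c. \<forall>x\<in>Dm. A (c *\<^sub>C x) = (\<lambda>z. c * A x z))"

definition positive_op :: "'a::cnormed_vector set \<Rightarrow> ('a \<Rightarrow> ('a \<Rightarrow> complex)) \<Rightarrow> bool" where
  "positive_op Dm A \<longleftrightarrow> (\<forall>x\<in>Dm. Im (A x x) = 0 \<and> 0 \<le> Re (A x x))"

definition adjoint_dom :: "'a::cnormed_vector set \<Rightarrow> ('a \<Rightarrow> ('a \<Rightarrow> complex)) \<Rightarrow> 'a set" where
  "adjoint_dom Dm A = {y. continuous_on Dm (\<lambda>x. A x y)}"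

text \<open>(x, A* y) = cnj ((A* y) x) and (A x, y) = A x y.\<close>
definition adjoint_op :: "'a::cnormed_vector set \<Rightarrow> ('a \<Rightarrow> ('a \<Rightarrow> complex)) \<Rightarrow> 'a \<Rightarrow> ('a \<Rightarrow> complex)" where
  "adjoint_op Dm A y = (THE w. w \<in> cdual \<and> (\<forall>x\<in>Dm. cnj (w x) = A x y))"

definition self_adjoint_op :: "'a::cnormed_vector set \<Rightarrow> ('a \<Rightarrow> ('a \<Rightarrow> complex)) \<Rightarrow> bool" where
  "self_adjoint_op Dm A \<longleftrightarrow> adjoint_dom Dm A = Dm \<and> (\<forall>y\<in>Dm. adjoint_op Dm A y = A y)"

end

theory Submission
  imports Defs
begin

text \<open>
  Coercivity and completeness make \<open>(D, t)\<close> a Hilbert space continuously embedded in \<open>X\<close>.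
  Minimizing the energy \<open>t(x, x) - 2 Re l(x)\<close> over a subspace \<open>K \<subseteq> D\<close> gives, by the
  parallelogram law, a \<open>t\<close>-Cauchy minimizing sequence whose \<open>t\<close>-limit \<open>w\<close> represents \<open>l\<close>:
  \<open>t(w, h) = l(h)\<close> for \<open>h \<in> K\<close>. For \<open>K = D\<close> and \<open>l \<in> X\<^sup>*\<close> this puts \<open>w\<close> into
  \<open>dom A\<close> with \<open>A w = l\<close>, so \<open>A\<close> maps onto \<open>X\<^sup>*\<close>, and by Hahn--Banach a vector annihilated by
  every \<open>A x\<close> is zero.

  Since \<open>t(x, x)\<close> is real, \<open>t\<close> is Hermitian, so \<open>(A x, y) = cnj (A y, x)\<close> on \<open>dom A\<close>: \<open>A\<close> is
  positive and \<open>A \<subseteq> A\<^sup>*\<close>. Conversely, for \<open>y \<in> dom A\<^sup>*\<close> the functional \<open>x \<mapsto> cnj (A x, y)\<close>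
  extends to some \<open>A z\<close>; then every \<open>A x\<close> annihilates \<open>y - z\<close>, so \<open>y = z \<in> dom A\<close>.
\<close>

section \<open>Complex scalars and the conjugate dual\<close>

lemma scaleC_of_real: "complex_of_real r *\<^sub>C (x::'a::cnormed_vector) = r *\<^sub>R x"
  by (simp add: scaleR_scaleC)

lemma scaleC_scaleR_commute: "c *\<^sub>C (r *\<^sub>R (x::'a::cnormed_vector)) = r *\<^sub>R (c *\<^sub>C x)"
  by (simp add: scaleR_scaleC scaleC_scaleC mult.commute)

lemma bounded_linear_scaleC: "bounded_linear (\<lambda>x::'a::cnormed_vector. c *\<^sub>C x)"
  by (rule bounded_linear_intro[where K="cmod c"])
     (auto simp: scaleC_add_right scaleC_scaleR_commute norm_scaleC mult.commute)

lemma scaleC_eq_Re_Im: "c *\<^sub>C (x::'a::cnormed_vector) = Re c *\<^sub>R x + Im c *\<^sub>R (\<i> *\<^sub>C x)"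
proof -
  have "c = complex_of_real (Re c) + complex_of_real (Im c) * \<i>"
    by (simp add: complex_eq_iff)
  then have "c *\<^sub>C x = complex_of_real (Re c) *\<^sub>C x + (complex_of_real (Im c) * \<i>) *\<^sub>C x"
    by (metis scaleC_add_left)
  then show ?thesis by (simp add: scaleC_of_real scaleC_scaleC[symmetric])
qed

lemma scaleC_ii_ii: "\<i> *\<^sub>C (\<i> *\<^sub>C (x::'a::cnormed_vector)) = - x"
  using scaleC_of_real[of "-1" x] by (simp add: scaleC_scaleC)

context
  fixes S :: "'a::cnormed_vector set"
  assumes S: "complex_subspace S"
begin

lemma complex_subspace_zero: "0 \<in> S"
  using S by (simp add: complex_subspace_def)

lemma complex_subspace_add: "x \<in> S \<Longrightarrow> y \<in> S \<Longrightarrow> x + y \<in> S"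
  using S by (simp add: complex_subspace_def)

lemma complex_subspace_scaleC: "x \<in> S \<Longrightarrow> c *\<^sub>C x \<in> S"
  using S by (simp add: complex_subspace_def)

lemma complex_subspace_scaleR: "x \<in> S \<Longrightarrow> r *\<^sub>R x \<in> S"
  using complex_subspace_scaleC[of x "complex_of_real r"] by (simp add: scaleC_of_real)

lemma complex_subspace_diff: "x \<in> S \<Longrightarrow> y \<in> S \<Longrightarrow> x - y \<in> S"
  using complex_subspace_add[of x "(-1) *\<^sub>R y"] complex_subspace_scaleR[of y "-1"] by simp

end

context
  fixes f :: "'a::cnormed_vector \<Rightarrow> complex"
  assumes f: "conj_linear f"
begin

lemma conj_linear_add: "f (x + y) = f x + f y"
  using f by (simp add: conj_linear_def)

lemma conj_linear_scaleC: "f (c *\<^sub>C x) = cnj c * f x"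
  using f by (simp add: conj_linear_def)

lemma conj_linear_scaleR: "f (r *\<^sub>R x) = r *\<^sub>R f x"
  using conj_linear_scaleC[of "complex_of_real r" x]
  by (simp add: scaleC_of_real scaleR_conv_of_real)

lemma conj_linear_diff: "f (x - y) = f x - f y"
  using conj_linear_add[of x "(-1) *\<^sub>R y"] conj_linear_scaleR[of "-1" y] by simp

end

lemma cdualD: "f \<in> cdual \<Longrightarrow> conj_linear f" "f \<in> cdual \<Longrightarrow> continuous_on UNIV f"
  unfolding cdual_def by auto

lemma cdual_add: "f \<in> cdual \<Longrightarrow> g \<in> cdual \<Longrightarrow> (\<lambda>x. f x + g x) \<in> cdual"
  unfolding cdual_def conj_linear_def by (auto intro: continuous_on_add simp: distrib_left)

lemma cdual_cmult: "f \<in> cdual \<Longrightarrow> (\<lambda>x. c * f x) \<in> cdual"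
  unfolding cdual_def conj_linear_def
  by (auto intro: continuous_on_mult_left simp: distrib_left mult.left_commute)

lemma continuous_homogeneous_bounded:
  fixes f :: "'a::real_normed_vector \<Rightarrow> 'b::real_normed_vector"
  assumes scaleR_S: "\<And>r x. x \<in> S \<Longrightarrow> r *\<^sub>R x \<in> S"
    and f_scaleR: "\<And>r x. x \<in> S \<Longrightarrow> f (r *\<^sub>R x) = r *\<^sub>R f x"
    and cont: "continuous_on S f" and "0 \<in> S"
  obtains K where "K > 0" "\<And>x. x \<in> S \<Longrightarrow> norm (f x) \<le> K * norm x"
proof -
  have f0: "f 0 = 0" using f_scaleR[OF \<open>0 \<in> S\<close>, of 0] by simp
  obtain d where d: "d > 0" "\<And>x. x \<in> S \<Longrightarrow> dist x 0 < d \<Longrightarrow> dist (f x) (f 0) < 1"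
    using cont \<open>0 \<in> S\<close> unfolding continuous_on_iff by (meson zero_less_one)
  have "norm (f x) \<le> (2 / d) * norm x" if x: "x \<in> S" for x
  proof (cases "x = 0")
    case True
    then show ?thesis using f0 by simp
  next
    case False
    define r where "r = d / (2 * norm x)"
    have r: "r > 0" "norm (r *\<^sub>R x) = d / 2" using False d(1) by (simp_all add: r_def)
    then have "dist (f (r *\<^sub>R x)) (f 0) < 1" using d by (intro d(2) scaleR_S x) simp
    then have "r * norm (f x) < 1" using f_scaleR[OF x] f0 r(1) by simp
    then have "norm (f x) < 1 / r" using r by (simp add: field_simps)
    also have "1 / r = (2 / d) * norm x" using False d by (simp add: r_def field_simps)
    finally show ?thesis by simp
  qed
  then show thesis using that[of "2 / d"] d(1) by simp
qed

lemma cdual_bounded: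
  assumes "f \<in> cdual"
  obtains K where "K > 0" "\<And>x. norm (f x) \<le> K * norm x"
  by (rule continuous_homogeneous_bounded[of UNIV f])
    (use cdualD[OF assms] conj_linear_scaleR that in auto)

lemma continuous_eq_on_dense:
  fixes f g :: "'a::topological_space \<Rightarrow> 'b::real_normed_vector"
  assumes "continuous_on UNIV f" "continuous_on UNIV g" "closure S = UNIV"
    and "\<And>x. x \<in> S \<Longrightarrow> f x = g x"
  shows "f x = g x"
proof -
  have "continuous_on (closure S) (\<lambda>x. f x - g x)" using assms by (auto intro!: continuous_intros)
  then have "f x - g x = 0" using continuous_constant_on_closure[of S "\<lambda>x. f x - g x" 0 x] assms
    by simp
  then show ?thesis by simp
qed

lemma cdual_eq_on_dense:
  assumes "f \<in> cdual" "g \<in> cdual" "closure S = UNIV" "\<And>x. x \<in> S \<Longrightarrow> f x = g x"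
  shows "f = g"
  using continuous_eq_on_dense[of f g S] cdualD(2) assms by blast

lemma cdual_if_extends_conj_linear:
  fixes f g :: "'a::cnormed_vector \<Rightarrow> complex"
  assumes S: "complex_subspace S" "closure S = UNIV"
    and g_add: "\<And>x y. x \<in> S \<Longrightarrow> y \<in> S \<Longrightarrow> g (x + y) = g x + g y"
    and g_scaleC: "\<And>c x. x \<in> S \<Longrightarrow> g (c *\<^sub>C x) = cnj c * g x"
    and cont: "continuous_on UNIV f" and fg: "\<And>x. x \<in> S \<Longrightarrow> f x = g x"
  shows "f \<in> cdual"
proof -
  have cont_add: "continuous_on UNIV (\<lambda>x. f (x + y))" for y
    using continuous_on_compose2[OF cont continuous_on_add[OF continuous_on_id continuous_on_const]]
    by simp
  have add_S: "f (x + y) = f x + f y" if "y \<in> S" for x y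
  proof (rule continuous_eq_on_dense[of "\<lambda>x. f (x + y)" "\<lambda>x. f x + f y" S x])
    show "f (x + y) = f x + f y" if "x \<in> S" for x
      using fg[of "x + y"] fg[of x] fg[of y] g_add[of x y] complex_subspace_add[OF S(1), of x y]
        that         \<open>y \<in> S\<close> by simp
  qed (use S cont cont_add in \<open>simp_all add: continuous_on_add\<close>)
  have add: "f (x + y) = f x + f y" for x y
  proof (rule continuous_eq_on_dense[of "\<lambda>y. f (x + y)" "\<lambda>y. f x + f y" S y])
    show "continuous_on UNIV (\<lambda>y. f (x + y))" using cont_add[of x] by (simp add: add.commute)
  qed (use S cont add_S in \<open>simp_all add: continuous_on_add\<close>)
  have scaleC: "f (c *\<^sub>C x) = cnj c * f x" for c x
  proof (rule continuous_eq_on_dense[of "\<lambda>x. f (c *\<^sub>C x)" "\<lambda>x. cnj c * f x" S x])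
    show "f (c *\<^sub>C x) = cnj c * f x" if "x \<in> S" for x
      using fg[of "c *\<^sub>C x"] fg[of x] g_scaleC[of x c] complex_subspace_scaleC[OF S(1), of x c] that
      by simp
    show "continuous_on UNIV (\<lambda>x. f (c *\<^sub>C x))"
      using continuous_on_compose2[OF cont
          bounded_linear.continuous_on[OF bounded_linear_scaleC continuous_on_id]]
      by simp
  qed (use S cont in \<open>simp_all add: continuous_on_mult_left\<close>)
  show "f \<in> cdual" by (simp add: cdual_def conj_linear_def add scaleC cont)
qed

lemma cdual_extension_from_dense:
  fixes g :: "'a::cnormed_vector \<Rightarrow> complex"
  assumes S: "complex_subspace S" "closure S = UNIV"
    and g_add: "\<And>x y. x \<in> S \<Longrightarrow> y \<in> S \<Longrightarrow> g (x + y) = g x + g y"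
    and g_scaleC: "\<And>c x. x \<in> S \<Longrightarrow> g (c *\<^sub>C x) = cnj c * g x"
    and g_cont: "continuous_on S g"
  obtains f where "f \<in> cdual" "\<And>x. x \<in> S \<Longrightarrow> f x = g x"
proof -
  have g_scaleR: "g (r *\<^sub>R x) = r *\<^sub>R g x" if "x \<in> S" for r x
    using g_scaleC[OF that, of "complex_of_real r"]
    by (simp add: scaleC_of_real scaleR_conv_of_real)
  obtain K where K: "K > 0" "\<And>x. x \<in> S \<Longrightarrow> norm (g x) \<le> K * norm x"
    by (rule continuous_homogeneous_bounded[of S g])
      (use complex_subspace_scaleR[OF S(1)] g_scaleR g_cont complex_subspace_zero[OF S(1)] in auto)
  have "K-lipschitz_on S g"
  proof (rule lipschitz_onI)
    fix x y assume xy: "x \<in> S" "y \<in> S"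
    have "g x = g (x - y) + g y"
      using g_add[of "x - y" y] complex_subspace_diff[OF S(1) xy] xy by simp
    then show "dist (g x) (g y) \<le> K * dist x y"
      using K(2)[OF complex_subspace_diff[OF S(1) xy]] by (simp add: dist_norm)
  qed (use K in simp)
  then have "uniformly_continuous_on S g" by (rule lipschitz_on_uniformly_continuous)
  then obtain f where f_cont: "uniformly_continuous_on (closure S) f"
    and fg: "\<And>x. x \<in> S \<Longrightarrow> g x = f x"
    by (metis uniformly_continuous_on_extension_on_closure)
  have "continuous_on UNIV f" using uniformly_continuous_imp_continuous[OF f_cont] S(2) by simp
  then have "f \<in> cdual" using cdual_if_extends_conj_linear[OF S g_add g_scaleC] fg by simp
  then show thesis by (rule that) (simp add: fg)
qed

section \<open>Hahn--Banach\<close>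

text \<open>Partial functionals are represented by their graphs, so that extension is inclusion and
  Zorn's lemma applies.\<close>

definition dominated_graph :: "'a::real_normed_vector \<Rightarrow> ('a \<times> real) set \<Rightarrow> bool" where
  "dominated_graph y G \<longleftrightarrow>
     (\<forall>x a b. (x, a) \<in> G \<longrightarrow> (x, b) \<in> G \<longrightarrow> a = b) \<and>
     (\<forall>x a x' a'. (x, a) \<in> G \<longrightarrow> (x', a') \<in> G \<longrightarrow> (x + x', a + a') \<in> G) \<and>
     (\<forall>r x a. (x, a) \<in> G \<longrightarrow> (r *\<^sub>R x, r * a) \<in> G) \<and>
     (\<forall>x a. (x, a) \<in> G \<longrightarrow> a \<le> norm x) \<and>
     (y, norm y) \<in> G"

context
  fixes y :: "'a::real_normed_vector" and G :: "('a \<times> real) set"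
  assumes G: "dominated_graph y G"
begin

lemma dominated_graph_unique: "(x, a) \<in> G \<Longrightarrow> (x, b) \<in> G \<Longrightarrow> a = b"
  using G unfolding dominated_graph_def by blast

lemma dominated_graph_add: "(x, a) \<in> G \<Longrightarrow> (x', a') \<in> G \<Longrightarrow> (x + x', a + a') \<in> G"
  using G unfolding dominated_graph_def by blast

lemma dominated_graph_scaleR: "(x, a) \<in> G \<Longrightarrow> (r *\<^sub>R x, r * a) \<in> G"
  using G unfolding dominated_graph_def by blast

lemma dominated_graph_le_norm: "(x, a) \<in> G \<Longrightarrow> a \<le> norm x"
  using G unfolding dominated_graph_def by blast

lemma dominated_graph_base: "(y, norm y) \<in> G"
  using G unfolding dominated_graph_def by blast

lemma dominated_graph_diff: "(x, a) \<in> G \<Longrightarrow> (x', a') \<in> G \<Longrightarrow> (x - x', a - a') \<in> G"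
  using dominated_graph_add[of x a "(-1) *\<^sub>R x'" "-1 * a'"] dominated_graph_scaleR[of x' a' "-1"]
  by simp

end

lemma dominated_graph_line: "dominated_graph y (range (\<lambda>r. (r *\<^sub>R y, r * norm y)))"
  (is "dominated_graph y ?L")
  unfolding dominated_graph_def
proof (intro conjI allI impI)
  show "a = b" if "(x, a) \<in> ?L" "(x, b) \<in> ?L" for x a b
    using that by (cases "y = 0") (auto simp: scaleR_cancel_right)
  show "(x + x', a + a') \<in> ?L" if xa: "(x, a) \<in> ?L" "(x', a') \<in> ?L" for x a x' a'
  proof -
    obtain r r' where "x = r *\<^sub>R y" "a = r * norm y" "x' = r' *\<^sub>R y" "a' = r' * norm y"
      using xa by blast
    then show ?thesis
      by (intro range_eqI[where x="r + r'"]) (simp add: scaleR_add_left distrib_right)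
  qed
  show "(s *\<^sub>R x, s * a) \<in> ?L" if xa: "(x, a) \<in> ?L" for s x a
  proof -
    obtain r where "x = r *\<^sub>R y" "a = r * norm y" using xa by blast
    then show ?thesis by (intro range_eqI[where x="s * r"]) simp
  qed
  show "a \<le> norm x" if "(x, a) \<in> ?L" for x a
    using that by (auto intro!: mult_right_mono)
  show "(y, norm y) \<in> ?L"
    by (rule range_eqI[where x=1]) simp
qed

lemma dominated_graph_chain_Union:
  assumes "\<C> \<noteq> {}" and chain: "subset.chain {G. dominated_graph y G} \<C>"
  shows "dominated_graph y (\<Union>\<C>)"
proof -
  have dom: "dominated_graph y G" if "G \<in> \<C>" for G
    using chain that by (auto simp: subset_chain_def)
  have common: "\<exists>G\<in>\<C>. p \<in> G \<and> p' \<in> G" if p: "p \<in> \<Union>\<C>" "p' \<in> \<Union>\<C>" for p p'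
  proof -
    obtain G G' where G: "G \<in> \<C>" "p \<in> G" "G' \<in> \<C>" "p' \<in> G'" using p by blast
    then have "G \<subseteq> G' \<or> G' \<subseteq> G" using chain unfolding subset_chain_def by blast
    then show ?thesis using G by blast
  qed
  obtain G0 where "G0 \<in> \<C>" using assms(1) by blast
  show ?thesis
    unfolding dominated_graph_def
  proof (intro conjI allI impI)
    show "a = b" if xa: "(x, a) \<in> \<Union>\<C>" "(x, b) \<in> \<Union>\<C>" for x a b
    proof -
      obtain G where "G \<in> \<C>" "(x, a) \<in> G" "(x, b) \<in> G" using common[OF xa] by blast
      then show ?thesis using dominated_graph_unique[OF dom] by blast
    qed
    show "(x + x', a + a') \<in> \<Union>\<C>" if xa: "(x, a) \<in> \<Union>\<C>" "(x', a') \<in> \<Union>\<C>" for x a x' a'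
    proof -
      obtain G where "G \<in> \<C>" "(x, a) \<in> G" "(x', a') \<in> G" using common[OF xa] by blast
      then show ?thesis using dominated_graph_add[OF dom] by blast
    qed
    show "(r *\<^sub>R x, r * a) \<in> \<Union>\<C>" if xa: "(x, a) \<in> \<Union>\<C>" for r x a
    proof -
      obtain G where "G \<in> \<C>" "(x, a) \<in> G" using xa by blast
      then show ?thesis using dominated_graph_scaleR[OF dom] by blast
    qed
    show "a \<le> norm x" if xa: "(x, a) \<in> \<Union>\<C>" for x a
    proof -
      obtain G where "G \<in> \<C>" "(x, a) \<in> G" using xa by blast
      then show ?thesis using dominated_graph_le_norm[OF dom] by blast
    qed
    show "(y, norm y) \<in> \<Union>\<C>"
      using \<open>G0 \<in> \<C>\<close> dominated_graph_base[OF dom[OF \<open>G0 \<in> \<C>\<close>]] by blast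
  qed
qed

text \<open>The one-step extension of Hahn--Banach: any value \<open>c\<close> between these bounds may be
  assigned to the new direction \<open>z\<close>.\<close>

lemma dominated_graph_extension_bounds:
  assumes M: "dominated_graph y M"
  obtains c where "\<And>x a. (x, a) \<in> M \<Longrightarrow> a - norm (x - z) \<le> c"
    and "\<And>x a. (x, a) \<in> M \<Longrightarrow> c \<le> norm (x + z) - a"
proof -
  have key: "a - norm (x - z) \<le> norm (w + z) - b" if "(x, a) \<in> M" "(w, b) \<in> M" for x a w b
  proof -
    have "a + b \<le> norm ((x - z) + (w + z))"
      using dominated_graph_le_norm[OF M dominated_graph_add[OF M that]] by simp
    also have "\<dots> \<le> norm (x - z) + norm (w + z)" by (rule norm_triangle_ineq)
    finally show ?thesis by simp
  qed
  let ?L = "{a - norm (x - z) | x a. (x, a) \<in> M}"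
  have zero: "(0, 0) \<in> M" using dominated_graph_scaleR[OF M dominated_graph_base[OF M], of 0]
    by simp
  have "?L \<noteq> {}" using zero by blast
  have "bdd_above ?L" using key[OF _ zero] by (auto intro!: bdd_aboveI[of _ "norm z"])
  show thesis
  proof (rule that[of "Sup ?L"])
    show "a - norm (x - z) \<le> Sup ?L" if "(x, a) \<in> M" for x a
      using that \<open>bdd_above ?L\<close> by (intro cSup_upper) blast+
    show "Sup ?L \<le> norm (x + z) - a" if "(x, a) \<in> M" for x a
      using \<open>?L \<noteq> {}\<close> key[OF _ that] by (intro cSup_least) blast+
  qed
qed

lemma dominated_extension_value:
  assumes M: "dominated_graph y M" and "(x, a) \<in> M"
    and lower: "\<And>x a. (x, a) \<in> M \<Longrightarrow> a - norm (x - z) \<le> c"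
    and upper: "\<And>x a. (x, a) \<in> M \<Longrightarrow> c \<le> norm (x + z) - a"
  shows "a + r * c \<le> norm (x + r *\<^sub>R z)"
proof (cases r "0::real" rule: linorder_cases)
  case less
  define s where "s = - r"
  have s: "s > 0" using less by (simp add: s_def)
  have "(1 / s) * a - norm ((1 / s) *\<^sub>R x - z) \<le> c"
    using lower[OF dominated_graph_scaleR[OF M \<open>(x, a) \<in> M\<close>]] .
  also have "(1 / s) *\<^sub>R x - z = (1 / s) *\<^sub>R (x - s *\<^sub>R z)" using s by (simp add: algebra_simps)
  finally have "(1 / s) * (a - norm (x - s *\<^sub>R z)) \<le> c" using s by (simp add: right_diff_distrib)
  then have "a - norm (x - s *\<^sub>R z) \<le> s * c" using s by (simp add: field_simps)
  then show ?thesis by (simp add: s_def)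
next
  case equal
  then show ?thesis using dominated_graph_le_norm[OF M \<open>(x, a) \<in> M\<close>] by simp
next
  case greater
  have "c \<le> norm ((1 / r) *\<^sub>R x + z) - (1 / r) * a"
    using upper[OF dominated_graph_scaleR[OF M \<open>(x, a) \<in> M\<close>]] .
  also have "(1 / r) *\<^sub>R x + z = (1 / r) *\<^sub>R (x + r *\<^sub>R z)" using greater by (simp add: algebra_simps)
  finally have "c \<le> (1 / r) * (norm (x + r *\<^sub>R z) - a)" using greater
    by (simp add: right_diff_distrib)
  then show ?thesis using greater by (simp add: field_simps)
qed

definition graph_adjoin :: "('a::real_vector \<times> real) set \<Rightarrow> 'a \<Rightarrow> real \<Rightarrow> ('a \<times> real) set" where
  "graph_adjoin M z c = {(x + r *\<^sub>R z, a + r * c) | x a r. (x, a) \<in> M}"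

lemma graph_adjoinI: "(x, a) \<in> M \<Longrightarrow> (x + r *\<^sub>R z, a + r * c) \<in> graph_adjoin M z c"
  unfolding graph_adjoin_def by blast

lemma graph_adjoinE:
  assumes "(u, b) \<in> graph_adjoin M z c"
  obtains x a r where "(x, a) \<in> M" "u = x + r *\<^sub>R z" "b = a + r * c"
  using assms unfolding graph_adjoin_def by blast

lemma dominated_graph_adjoin:
  assumes M: "dominated_graph y M" and z: "\<And>a. (z, a) \<notin> M"
    and lower: "\<And>x a. (x, a) \<in> M \<Longrightarrow> a - norm (x - z) \<le> c"
    and upper: "\<And>x a. (x, a) \<in> M \<Longrightarrow> c \<le> norm (x + z) - a"
  shows "dominated_graph y (graph_adjoin M z c)"
  unfolding dominated_graph_def
proof (intro conjI allI impI)
  fix u b b' assume "(u, b) \<in> graph_adjoin M z c" "(u, b') \<in> graph_adjoin M z c"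
  then obtain x a r x' a' r' where h: "(x, a) \<in> M" "(x', a') \<in> M"
    "u = x + r *\<^sub>R z" "b = a + r * c" "u = x' + r' *\<^sub>R z" "b' = a' + r' * c"
    by (metis graph_adjoinE)
  have "r = r'"
  proof (rule ccontr)
    assume "r \<noteq> r'"
    moreover have "x - x' = (r' - r) *\<^sub>R z" using h(3,5) by (simp add: algebra_simps)
    ultimately have "z = (1 / (r' - r)) *\<^sub>R (x - x')" by simp
    then show False
      using z[of "(1 / (r' - r)) * (a - a')"]
        dominated_graph_scaleR[OF M dominated_graph_diff[OF M h(1,2)], of "1 / (r' - r)"] by simp
  qed
  then show "b = b'" using h dominated_graph_unique[OF M] by auto
next
  fix u b u' b' assume "(u, b) \<in> graph_adjoin M z c" "(u', b') \<in> graph_adjoin M z c"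
  then obtain x a r x' a' r' where h: "(x, a) \<in> M" "(x', a') \<in> M"
    "u = x + r *\<^sub>R z" "b = a + r * c" "u' = x' + r' *\<^sub>R z" "b' = a' + r' * c"
    by (metis graph_adjoinE)
  show "(u + u', b + b') \<in> graph_adjoin M z c"
    using graph_adjoinI[OF dominated_graph_add[OF M h(1,2)], of "r + r'"] h
    by (simp add: algebra_simps)
next
  fix s u b assume "(u, b) \<in> graph_adjoin M z c"
  then obtain x a r where h: "(x, a) \<in> M" "u = x + r *\<^sub>R z" "b = a + r * c"
    by (rule graph_adjoinE)
  have "(s *\<^sub>R x, s * a) \<in> M" using dominated_graph_scaleR[OF M h(1)] .
  from graph_adjoinI[OF this, of "s * r"] show "(s *\<^sub>R u, s * b) \<in> graph_adjoin M z c"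
    using h by (simp add: algebra_simps)
next
  fix u b assume "(u, b) \<in> graph_adjoin M z c"
  then obtain x a r where "(x, a) \<in> M" "u = x + r *\<^sub>R z" "b = a + r * c"
    by (rule graph_adjoinE)
  then show "b \<le> norm u" using dominated_extension_value[OF M _ lower upper] by blast
next
  show "(y, norm y) \<in> graph_adjoin M z c"
    using graph_adjoinI[OF dominated_graph_base[OF M], of 0] by simp
qed

lemma dominated_graph_extend:
  assumes M: "dominated_graph y M" and z: "\<And>a. (z, a) \<notin> M"
  obtains M' where "dominated_graph y M'" "M \<subset> M'"
proof -
  obtain c where lower: "\<And>x a. (x, a) \<in> M \<Longrightarrow> a - norm (x - z) \<le> c"
    and upper: "\<And>x a. (x, a) \<in> M \<Longrightarrow> c \<le> norm (x + z) - a"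
    using dominated_graph_extension_bounds[OF M] by blast
  have "M \<subseteq> graph_adjoin M z c" using graph_adjoinI[of _ _ M 0] by auto
  moreover have "(z, c) \<in> graph_adjoin M z c"
    using graph_adjoinI[OF dominated_graph_scaleR[OF M dominated_graph_base[OF M], of 0], of 1]
    by simp
  ultimately show thesis
    using that[OF dominated_graph_adjoin[OF M z lower upper]] z by blast
qed

theorem real_Hahn_Banach_norming:
  fixes y :: "'a::real_normed_vector"
  obtains g :: "'a \<Rightarrow> real" where "\<And>x x'. g (x + x') = g x + g x'" "\<And>r x. g (r *\<^sub>R x) = r * g x"
    "\<And>x. g x \<le> norm x" "g y = norm y"
proof -
  have "\<exists>M\<in>{G. dominated_graph y G}. \<forall>M'\<in>{G. dominated_graph y G}. M \<subseteq> M' \<longrightarrow> M' = M"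
  proof (rule subset_Zorn_nonempty)
    show "{G. dominated_graph y G} \<noteq> {}" using dominated_graph_line by blast
  qed (simp add: dominated_graph_chain_Union)
  then obtain M where M: "dominated_graph y M"
    and max: "\<And>M'. dominated_graph y M' \<Longrightarrow> M \<subseteq> M' \<Longrightarrow> M' = M"
    by blast
  have total: "\<exists>a. (x, a) \<in> M" for x
  proof (rule ccontr)
    assume "\<nexists>a. (x, a) \<in> M"
    then obtain M' where "dominated_graph y M'" "M \<subset> M'" using dominated_graph_extend[OF M] by blast
    then show False using max by blast
  qed
  define g where "g x = (THE a. (x, a) \<in> M)" for x
  have g: "(x, a) \<in> M \<longleftrightarrow> a = g x" for x a
  proof -
    obtain a0 where a0: "(x, a0) \<in> M" using total by blast
    have "g x = a0" unfolding g_def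
      by (rule the_equality) (use a0 dominated_graph_unique[OF M] in auto)
    then show ?thesis using a0 dominated_graph_unique[OF M] by blast
  qed
  show thesis
  proof (rule that)
    show "g (x + x') = g x + g x'" for x x'
      using dominated_graph_add[OF M, of x "g x" x' "g x'"] by (simp add: g)
    show "g (r *\<^sub>R x) = r * g x" for r x
      using dominated_graph_scaleR[OF M, of x "g x" r] by (simp add: g)
    show "g x \<le> norm x" for x
      using dominated_graph_le_norm[OF M, of x "g x"] by (simp add: g)
    show "g y = norm y"
      using dominated_graph_base[OF M] by (simp add: g)
  qed
qed

lemma cdual_complexification:
  fixes g :: "'a::cnormed_vector \<Rightarrow> real"
  assumes g: "bounded_linear g"
  shows "(\<lambda>x. complex_of_real (g x) + \<i> * complex_of_real (g (\<i> *\<^sub>C x))) \<in> cdual"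
    (is "?f \<in> cdual")
proof -
  have g_add: "g (x + x') = g x + g x'" for x x'
    using linear_add[OF bounded_linear.linear[OF g]] .
  have g_scaleR: "g (r *\<^sub>R x) = r * g x" for r x
    using linear_scale[OF bounded_linear.linear[OF g]] by simp
  have g_scaleC: "g (c *\<^sub>C x) = Re c * g x + Im c * g (\<i> *\<^sub>C x)" for c x
    by (subst scaleC_eq_Re_Im) (simp only: g_add g_scaleR)
  have "conj_linear ?f"
    unfolding conj_linear_def
  proof (intro conjI allI)
    show "?f (x + x') = ?f x + ?f x'" for x x'
      by (simp add: scaleC_add_right g_add algebra_simps)
    fix c x
    have "\<i> *\<^sub>C (c *\<^sub>C x) = c *\<^sub>C (\<i> *\<^sub>C (x::'a))" by (metis scaleC_scaleC mult.commute)
    then have "g (\<i> *\<^sub>C (c *\<^sub>C x)) = Re c * g (\<i> *\<^sub>C x) + Im c * g (- x)"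
      using g_scaleC[of c "\<i> *\<^sub>C x"] by (simp only: scaleC_ii_ii)
    also have "g (- x) = - g x" using g_scaleR[of "-1" x] by simp
    finally show "?f (c *\<^sub>C x) = cnj c * ?f x"
      using g_scaleC[of c x] by (simp add: complex_eq_iff algebra_simps)
  qed
  moreover have "continuous_on UNIV (\<lambda>x. g (h x))" if "bounded_linear h" for h
    using bounded_linear.continuous_on[OF bounded_linear_compose[OF g that] continuous_on_id]
    by simp
  then have "continuous_on UNIV ?f"
    using bounded_linear_ident bounded_linear_scaleC by (intro continuous_intros) auto
  ultimately show ?thesis by (simp add: cdual_def)
qed

lemma cdual_separates_points:
  fixes y :: "'a::cnormed_vector"
  assumes "y \<noteq> 0"
  obtains f where "f \<in> cdual" "f y \<noteq> 0"
proof (rule real_Hahn_Banach_norming[of y])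
  fix g :: "'a \<Rightarrow> real"
  assume g_add: "\<And>x x'. g (x + x') = g x + g x'" and g_scaleR: "\<And>r x. g (r *\<^sub>R x) = r * g x"
    and g_le: "\<And>x. g x \<le> norm x" and g_y: "g y = norm y"
  have "bounded_linear g"
  proof (rule bounded_linear_intro[where K=1])
    show "g (x + x') = g x + g x'" for x x' by (rule g_add)
    show "g (r *\<^sub>R x) = r *\<^sub>R g x" for r x by (simp add: g_scaleR)
    show "norm (g x) \<le> norm x * 1" for x
      using g_le[of x] g_le[of "-x"] g_scaleR[of "-1" x] by simp
  qed
  then have "(\<lambda>x. complex_of_real (g x) + \<i> * complex_of_real (g (\<i> *\<^sub>C x))) \<in> cdual"
    by (rule cdual_complexification)
  moreover have "Re (complex_of_real (g y) + \<i> * complex_of_real (g (\<i> *\<^sub>C y))) \<noteq> 0"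
    using g_y assms by simp
  ultimately show thesis using that by fastforce
qed

lemma cdual_annihilator_zero:
  assumes "\<And>f. f \<in> cdual \<Longrightarrow> f x = 0"
  shows "x = 0"
proof (rule ccontr)
  assume "x \<noteq> 0"
  then obtain f where "f \<in> cdual" "f x \<noteq> 0" by (rule cdual_separates_points)
  then show False using assms by blast
qed

section \<open>Closed coercive forms\<close>

locale closed_coercive_form =
  fixes D :: "'a::cnormed_vector set" and t :: "'a \<Rightarrow> 'a \<Rightarrow> complex" and \<gamma> :: real
  assumes D_subspace: "complex_subspace D" and D_dense: "closure D = UNIV"
    and sesquilinear: "sesquilinear_on D t"
    and \<gamma>_pos: "\<gamma> > 0"
    and coercive: "\<forall>x\<in>D. Im (t x x) = 0 \<and> \<gamma> * (norm x)\<^sup>2 \<le> Re (t x x)"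
    and complete: "form_complete D t"
begin

definition quad :: "'a \<Rightarrow> real" where "quad x = Re (t x x)"

lemmas D_zero = complex_subspace_zero[OF D_subspace]
  and D_add = complex_subspace_add[OF D_subspace]
  and D_scaleC = complex_subspace_scaleC[OF D_subspace]
  and D_scaleR = complex_subspace_scaleR[OF D_subspace]
  and D_diff = complex_subspace_diff[OF D_subspace]

lemma t_add_left: "x \<in> D \<Longrightarrow> x' \<in> D \<Longrightarrow> y \<in> D \<Longrightarrow> t (x + x') y = t x y + t x' y"
  using sesquilinear by (simp add: sesquilinear_on_def)

lemma t_scaleC_left: "x \<in> D \<Longrightarrow> y \<in> D \<Longrightarrow> t (c *\<^sub>C x) y = c * t x y"
  using sesquilinear by (simp add: sesquilinear_on_def)

lemma t_add_right: "x \<in> D \<Longrightarrow> y \<in> D \<Longrightarrow> y' \<in> D \<Longrightarrow> t x (y + y') = t x y + t x y'"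
  using sesquilinear by (simp add: sesquilinear_on_def)

lemma t_scaleC_right: "x \<in> D \<Longrightarrow> y \<in> D \<Longrightarrow> t x (c *\<^sub>C y) = cnj c * t x y"
  using sesquilinear by (simp add: sesquilinear_on_def)

lemma t_scaleR_left: "x \<in> D \<Longrightarrow> y \<in> D \<Longrightarrow> t (r *\<^sub>R x) y = r * t x y"
  using t_scaleC_left[of x y "complex_of_real r"] by (simp add: scaleC_of_real)

lemma t_scaleR_right: "x \<in> D \<Longrightarrow> y \<in> D \<Longrightarrow> t x (r *\<^sub>R y) = r * t x y"
  using t_scaleC_right[of x y "complex_of_real r"] by (simp add: scaleC_of_real)

lemma t_diff_left: "x \<in> D \<Longrightarrow> x' \<in> D \<Longrightarrow> y \<in> D \<Longrightarrow> t (x - x') y = t x y - t x' y"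
  using t_add_left[of x "(-1) *\<^sub>R x'" y] t_scaleR_left[of x' y "-1"] D_scaleR[of x' "-1"] by simp

lemma t_zero_left: "y \<in> D \<Longrightarrow> t 0 y = 0"
  using t_scaleR_left[OF D_zero, of y 0] by simp

lemma Im_t_diag: "x \<in> D \<Longrightarrow> Im (t x x) = 0"
  using coercive by simp

lemma quad_ge: "x \<in> D \<Longrightarrow> \<gamma> * (norm x)\<^sup>2 \<le> quad x"
  using coercive by (simp add: quad_def)

lemma quad_nonneg: "x \<in> D \<Longrightarrow> 0 \<le> quad x"
  using quad_ge[of x] \<gamma>_pos by (smt (verit) zero_le_mult_iff zero_le_power2)

lemma t_expand:
  "x \<in> D \<Longrightarrow> y \<in> D \<Longrightarrow> t (x + y) (x + y) = t x x + t x y + t y x + t y y"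
  by (simp add: t_add_left t_add_right D_add)

text \<open>A form with real diagonal is Hermitian (polarization with \<open>y\<close> and \<open>\<i> y\<close>).\<close>

lemma t_conj_sym:
  assumes x: "x \<in> D" and y: "y \<in> D"
  shows "t y x = cnj (t x y)"
proof -
  have re: "Im (t x y + t y x) = 0"
    using Im_t_diag[OF D_add[OF x y]] Im_t_diag[OF x] Im_t_diag[OF y] t_expand[OF x y] by simp
  have iy: "\<i> *\<^sub>C y \<in> D" using D_scaleC[OF y] .
  have "t (x + \<i> *\<^sub>C y) (x + \<i> *\<^sub>C y) = t x x - \<i> * t x y + \<i> * t y x + t y y"
    using t_expand[OF x iy] t_scaleC_left[OF y x, of \<i>] t_scaleC_right[OF x y, of \<i>]
      t_scaleC_left[OF y iy, of \<i>] t_scaleC_right[OF y y, of \<i>] by simp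
  then have im: "Re (t y x - t x y) = 0"
    using Im_t_diag[OF D_add[OF x iy]] Im_t_diag[OF x] Im_t_diag[OF y] by simp
  show ?thesis using re im by (simp add: complex_eq_iff)
qed

lemma quad_add: "x \<in> D \<Longrightarrow> y \<in> D \<Longrightarrow> quad (x + y) = quad x + 2 * Re (t x y) + quad y"
  using t_expand[of x y] t_conj_sym[of x y] by (simp add: quad_def)

lemma quad_scaleR: "x \<in> D \<Longrightarrow> quad (r *\<^sub>R x) = r\<^sup>2 * quad x"
  using t_scaleR_left[OF _ D_scaleR, of x x r r] t_scaleR_right[of x x r]
  by (simp add: quad_def power2_eq_square)

lemma quad_diff: "x \<in> D \<Longrightarrow> y \<in> D \<Longrightarrow> quad (x - y) = quad x - 2 * Re (t x y) + quad y"
  using quad_add[of x "(-1) *\<^sub>R y"] quad_scaleR[of y "-1"] t_scaleR_right[of x y "-1"]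
    D_scaleR[of y "-1"]
  by simp

lemma Re_t_le_quad: "x \<in> D \<Longrightarrow> y \<in> D \<Longrightarrow> 2 * Re (t x y) \<le> quad x + quad y"
  using quad_diff[of x y] quad_nonneg[OF D_diff, of x y] by simp

lemma quad_Cauchy_converges:
  assumes u: "\<And>n. u n \<in> D" and Cauchy: "\<And>e. e > 0 \<Longrightarrow> \<exists>N. \<forall>i\<ge>N. \<forall>j\<ge>N. quad (u i - u j) < e"
  obtains x where "x \<in> D" "(\<lambda>n. quad (u n - x)) \<longlonglongrightarrow> 0"
proof -
  have "\<exists>N. \<forall>i\<ge>N. \<forall>j\<ge>N. sqrt (quad (u i - u j)) < e" if "e > 0" for e
  proof -
    obtain N where "\<forall>i\<ge>N. \<forall>j\<ge>N. quad (u i - u j) < e\<^sup>2" using Cauchy[of "e\<^sup>2"] \<open>e > 0\<close> by auto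
    then show ?thesis using that by (metis real_sqrt_less_mono real_sqrt_abs abs_of_pos)
  qed
  then obtain x where x: "x \<in> D" and lim: "(\<lambda>n. sqrt (quad (u n - x))) \<longlonglongrightarrow> 0"
    using complete u unfolding form_complete_def quad_def by blast
  have "(\<lambda>n. (sqrt (quad (u n - x)))\<^sup>2) \<longlonglongrightarrow> 0\<^sup>2" by (rule tendsto_power[OF lim])
  moreover have "(sqrt (quad (u n - x)))\<^sup>2 = quad (u n - x)" for n
    using quad_nonneg[OF D_diff[OF u x]] by simp
  ultimately show thesis using that x by simp
qed

lemma tendsto_if_quad_tendsto:
  assumes "\<And>n. u n \<in> D" "x \<in> D" "(\<lambda>n. quad (u n - x)) \<longlonglongrightarrow> 0"
  shows "u \<longlonglongrightarrow> x"
proof -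
  have lim: "(\<lambda>n. sqrt (quad (u n - x) / \<gamma>)) \<longlonglongrightarrow> sqrt (0 / \<gamma>)"
    by (intro tendsto_real_sqrt tendsto_divide assms(3) tendsto_const) (use \<gamma>_pos in simp)
  have bound: "norm (u n - x) \<le> sqrt (quad (u n - x) / \<gamma>)" for n
  proof (rule real_le_rsqrt)
    show "(norm (u n - x))\<^sup>2 \<le> quad (u n - x) / \<gamma>"
      using quad_ge[OF D_diff[OF assms(1,2)]] \<gamma>_pos by (metis mult.commute pos_le_divide_eq)
  qed
  have "(\<lambda>n. norm (u n - x)) \<longlonglongrightarrow> 0"
    by (rule real_tendsto_sandwich[where f="\<lambda>n. 0" and h="\<lambda>n. sqrt (quad (u n - x) / \<gamma>)"])
      (use lim bound in simp_all)
  then show ?thesis by (simp add: LIM_zero_iff tendsto_norm_zero_iff)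
qed

end

section \<open>Minimizing the energy\<close>

lemma linear_coeff_zero_if_quadratic_nonneg:
  fixes A Q :: real
  assumes "\<And>s. 0 \<le> s * A + s\<^sup>2 * Q"
  shows "A = 0"
proof (rule ccontr)
  assume "A \<noteq> 0"
  define u where "u = \<bar>Q\<bar> + 1"
  have u: "u > 0" "Q < u" by (simp_all add: u_def)
  have "0 \<le> (- A / u) * A + (- A / u)\<^sup>2 * Q" by (rule assms)
  also have "\<dots> = (A\<^sup>2 / u\<^sup>2) * (Q - u)"
    using u by (simp add: field_simps power2_eq_square)
  also have "\<dots> < 0" using \<open>A \<noteq> 0\<close> u by (intro mult_pos_neg) simp_all
  finally show False by simp
qed

locale form_energy = closed_coercive_form +
  fixes K :: "'a set" and l :: "'a \<Rightarrow> complex" and B :: real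
  assumes K_subspace: "complex_subspace K" and K_subset: "K \<subseteq> D"
    and l_add: "\<And>x y. x \<in> K \<Longrightarrow> y \<in> K \<Longrightarrow> l (x + y) = l x + l y"
    and l_scaleC: "\<And>c x. x \<in> K \<Longrightarrow> l (c *\<^sub>C x) = cnj c * l x"
    and energy_bounded_below: "\<And>x. x \<in> K \<Longrightarrow> B \<le> quad x - 2 * Re (l x)"
begin

definition energy :: "'a \<Rightarrow> real" where "energy x = quad x - 2 * Re (l x)"

definition min_energy :: real where "min_energy = Inf (energy ` K)"

definition minimizing :: "(nat \<Rightarrow> 'a) \<Rightarrow> bool" where
  "minimizing m \<longleftrightarrow> (\<forall>n. m n \<in> K \<and> energy (m n) < min_energy + inverse (real (Suc n)))"

lemma K_D: "x \<in> K \<Longrightarrow> x \<in> D"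
  using K_subset by blast

lemma Re_l_scaleR: "x \<in> K \<Longrightarrow> Re (l (r *\<^sub>R x)) = r * Re (l x)"
  using l_scaleC[of x "complex_of_real r"] by (simp add: scaleC_of_real)

lemma min_energy_le: "x \<in> K \<Longrightarrow> min_energy \<le> energy x"
  unfolding min_energy_def
  by (rule cInf_lower)
    (use energy_bounded_below in \<open>auto simp: energy_def intro!: bdd_belowI[of _ B]\<close>)

lemma minimizing_exists: "\<exists>m. minimizing m"
proof -
  have "\<exists>x\<in>K. energy x < min_energy + inverse (real (Suc n))" for n
  proof -
    have "energy ` K \<noteq> {}" using complex_subspace_zero[OF K_subspace] by blast
    from cInf_lessD[OF this, of "min_energy + inverse (real (Suc n))"]
    show ?thesis by (simp add: min_energy_def)
  qed
  then show ?thesis unfolding minimizing_def by metis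
qed

lemma energy_parallelogram:
  assumes a: "a \<in> K" and b: "b \<in> K"
  shows "quad (a - b) = 2 * energy a + 2 * energy b - 4 * energy ((1/2) *\<^sub>R (a + b))"
proof -
  have aD: "a \<in> D" and bD: "b \<in> D" using a b K_D by auto
  have "quad ((1/2) *\<^sub>R (a + b)) = quad (a + b) / 4"
    using quad_scaleR[OF D_add[OF aD bD], of "1/2"] by (simp add: power2_eq_square)
  moreover have "Re (l ((1/2) *\<^sub>R (a + b))) = (Re (l a) + Re (l b)) / 2"
    using Re_l_scaleR[OF complex_subspace_add[OF K_subspace a b], of "1/2"] l_add[OF a b] by simp
  ultimately show ?thesis
    unfolding energy_def using quad_add[OF aD bD] quad_diff[OF aD bD] by (simp add: algebra_simps)
qed

lemma minimizing_quad_diff_le: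
  assumes "minimizing m"
  shows "quad (m i - m j) \<le> 2 * inverse (real (Suc i)) + 2 * inverse (real (Suc j))"
proof -
  have m: "m n \<in> K" "energy (m n) < min_energy + inverse (real (Suc n))" for n
    using assms by (auto simp: minimizing_def)
  have "min_energy \<le> energy ((1/2) *\<^sub>R (m i + m j))"
    by (intro min_energy_le complex_subspace_scaleR[OF K_subspace]
        complex_subspace_add[OF K_subspace] m)
  then show ?thesis using energy_parallelogram[OF m(1) m(1), of i j] m(2)[of i] m(2)[of j]
    by linarith
qed

lemma minimizing_converges:
  assumes "minimizing m"
  obtains w where "w \<in> D" "(\<lambda>n. quad (m n - w)) \<longlonglongrightarrow> 0"
proof (rule quad_Cauchy_converges[of m])
  show "m n \<in> D" for n using assms K_D by (auto simp: minimizing_def)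
next
  fix e :: real assume "e > 0"
  obtain N :: nat where N: "4 / e < real N" using reals_Archimedean2 by blast
  have "quad (m i - m j) < e" if "i \<ge> N" "j \<ge> N" for i j
  proof -
    have "inverse (real (Suc i)) \<le> inverse (real (Suc N))"
      "inverse (real (Suc j)) \<le> inverse (real (Suc N))"
      using that by (simp_all add: le_imp_inverse_le)
    moreover have "4 * inverse (real (Suc N)) < e" using N \<open>e > 0\<close> by (simp add: field_simps)
    ultimately show ?thesis using minimizing_quad_diff_le[OF assms, of i j] by linarith
  qed
  then show "\<exists>N. \<forall>i\<ge>N. \<forall>j\<ge>N. quad (m i - m j) < e" by blast
qed (rule that)

text \<open>Euler--Lagrange equation: the energy of \<open>m n + s h\<close> is at least \<open>min_energy\<close>, which in
  the limit leaves a quadratic in \<open>s\<close> that is nonnegative.\<close>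

lemma minimizing_limit_Re_eq:
  assumes "minimizing m" and w: "w \<in> D" "(\<lambda>n. quad (m n - w)) \<longlonglongrightarrow> 0" and h: "h \<in> K"
  shows "Re (t w h) = Re (l h)"
proof -
  have m: "m n \<in> K" "energy (m n) < min_energy + inverse (real (Suc n))" for n
    using assms(1) by (auto simp: minimizing_def)
  have hD: "h \<in> D" using h K_D by blast
  let ?A = "Re (t w h) - Re (l h)"
  have "0 \<le> s * (2 * ?A) + s\<^sup>2 * (2 * quad h)" for s
  proof -
    have sh: "s *\<^sub>R h \<in> K" using complex_subspace_scaleR[OF K_subspace h] .
    have bound: "- inverse (real (Suc n)) - quad (m n - w) \<le> 2 * s * ?A + 2 * s\<^sup>2 * quad h" for n
    proof -
      have mD: "m n \<in> D" using m(1) K_D by blast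
      have "min_energy \<le> energy (m n + s *\<^sub>R h)"
        by (rule min_energy_le[OF complex_subspace_add[OF K_subspace m(1) sh]])
      also have "energy (m n + s *\<^sub>R h)
          = energy (m n) + 2 * s * Re (t (m n) h) + s\<^sup>2 * quad h - 2 * s * Re (l h)"
        using quad_add[OF mD D_scaleR[OF hD]] quad_scaleR[OF hD, of s]
          t_scaleR_right[OF mD hD, of s] l_add[OF m(1) sh] Re_l_scaleR[OF h, of s]
        by (simp add: energy_def algebra_simps)
      finally have 1:
        "min_energy \<le> energy (m n) + 2 * s * Re (t (m n) h) + s\<^sup>2 * quad h - 2 * s * Re (l h)" .
      have 2: "t (m n) h = t w h + t (m n - w) h" using t_diff_left[OF mD w(1) hD] by simp
      have "2 * Re (t (m n - w) (s *\<^sub>R h)) \<le> quad (m n - w) + quad (s *\<^sub>R h)"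
        by (rule Re_t_le_quad[OF D_diff[OF mD w(1)] D_scaleR[OF hD]])
      then have 3: "2 * s * Re (t (m n - w) h) \<le> quad (m n - w) + s\<^sup>2 * quad h"
        using t_scaleR_right[OF D_diff[OF mD w(1)] hD, of s] quad_scaleR[OF hD, of s] by simp
      show ?thesis using 1 2 3 m(2)[of n] by (simp add: algebra_simps)
    qed
    have "(\<lambda>n. - inverse (real (Suc n)) - quad (m n - w)) \<longlonglongrightarrow> - 0 - 0"
      by (intro tendsto_diff tendsto_minus LIMSEQ_inverse_real_of_nat w(2))
    then have "- 0 - 0 \<le> 2 * s * ?A + 2 * s\<^sup>2 * quad h"
      by (rule LIMSEQ_le_const2) (use bound in blast)
    then show ?thesis by (simp add: algebra_simps)
  qed
  then have "2 * ?A = 0" by (rule linear_coeff_zero_if_quadratic_nonneg)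
  then show ?thesis by simp
qed

lemma minimizing_limit_eq:
  assumes "minimizing m" "w \<in> D" "(\<lambda>n. quad (m n - w)) \<longlonglongrightarrow> 0" and h: "h \<in> K"
  shows "t w h = l h"
proof -
  have "Re (t w (\<i> *\<^sub>C h)) = Re (l (\<i> *\<^sub>C h))"
    by (rule minimizing_limit_Re_eq[OF assms(1-3) complex_subspace_scaleC[OF K_subspace h]])
  then have "Im (t w h) = Im (l h)"
    using t_scaleC_right[OF assms(2) K_D[OF h], of \<i>] l_scaleC[OF h, of \<i>] by simp
  then show ?thesis using minimizing_limit_Re_eq[OF assms] by (simp add: complex_eq_iff)
qed

lemma representer_exists:
  obtains w m where "w \<in> D" "\<And>n. m n \<in> K" "(\<lambda>n. quad (m n - w)) \<longlonglongrightarrow> 0"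
    "\<And>h. h \<in> K \<Longrightarrow> t w h = l h"
proof -
  obtain m where m: "minimizing m" using minimizing_exists by blast
  obtain w where w: "w \<in> D" "(\<lambda>n. quad (m n - w)) \<longlonglongrightarrow> 0"
    using minimizing_converges[OF m] by blast
  show thesis
    by (rule that[OF w(1) _ w(2) minimizing_limit_eq[OF m w]]) (use m in \<open>simp add: minimizing_def\<close>)
qed

end

section \<open>The associated operator\<close>

context closed_coercive_form
begin

lemma cdual_represented_by_form:
  assumes f: "f \<in> cdual"
  obtains x where "x \<in> D" "\<And>h. h \<in> D \<Longrightarrow> t x h = f h"
proof -
  obtain C where C: "\<And>x. norm (f x) \<le> C * norm x" using cdual_bounded[OF f] by blast
  have "- (C\<^sup>2 / \<gamma>) \<le> quad x - 2 * Re (f x)" if x: "x \<in> D" for x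
  proof -
    have "0 \<le> (\<gamma> * norm x - C)\<^sup>2 / \<gamma>" using \<gamma>_pos by simp
    also have "\<dots> = \<gamma> * (norm x)\<^sup>2 - 2 * C * norm x + C\<^sup>2 / \<gamma>"
      using \<gamma>_pos by (simp add: field_simps power2_eq_square)
    finally have "2 * C * norm x \<le> \<gamma> * (norm x)\<^sup>2 + C\<^sup>2 / \<gamma>" by simp
    moreover have "Re (f x) \<le> C * norm x" using complex_Re_le_cmod[of "f x"] C[of x] by linarith
    ultimately show ?thesis using quad_ge[OF x] by linarith
  qed
  then interpret form_energy D t \<gamma> D f "- (C\<^sup>2 / \<gamma>)"
    using D_subspace cdualD(1)[OF f]
    by unfold_locales (auto simp: conj_linear_add conj_linear_scaleC)
  show thesis using representer_exists that by metis
qed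

abbreviation dom_A :: "'a set" where "dom_A \<equiv> form_dom D t"

abbreviation A :: "'a \<Rightarrow> 'a \<Rightarrow> complex" where "A \<equiv> form_op D t"

lemma form_dom_subset: "x \<in> dom_A \<Longrightarrow> x \<in> D"
  by (simp add: form_dom_def)

lemma form_op_eqI:
  assumes "z \<in> cdual" "\<And>y. y \<in> D \<Longrightarrow> z y = t x y"
  shows "A x = z"
  unfolding form_op_def
proof (rule the_equality)
  show "z \<in> cdual \<and> (\<forall>y\<in>D. z y = t x y)" using assms by simp
  show "z' = z" if "z' \<in> cdual \<and> (\<forall>y\<in>D. z' y = t x y)" for z'
    using that assms by (intro cdual_eq_on_dense[OF _ _ D_dense]) auto
qed

lemma form_op_extends_form:
  assumes "x \<in> dom_A"
  shows "A x \<in> cdual \<and> (\<forall>y\<in>D. A x y = t x y)"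
proof -
  have x: "x \<in> D" "continuous_on D (t x)" using assms by (auto simp: form_dom_def)
  obtain z where z: "z \<in> cdual" "\<And>y. y \<in> D \<Longrightarrow> z y = t x y"
    by (rule cdual_extension_from_dense[OF D_subspace D_dense, of "t x"])
      (use x t_add_right t_scaleC_right in auto)
  then show ?thesis using form_op_eqI[OF z] by simp
qed

lemma form_op_cdual: "x \<in> dom_A \<Longrightarrow> A x \<in> cdual"
  using form_op_extends_form by blast

lemma form_op_apply: "x \<in> dom_A \<Longrightarrow> y \<in> D \<Longrightarrow> A x y = t x y"
  using form_op_extends_form by blast

lemma form_op_surj:
  assumes f: "f \<in> cdual"
  obtains x where "x \<in> dom_A" "A x = f"
proof -
  obtain x where x: "x \<in> D" "\<And>h. h \<in> D \<Longrightarrow> t x h = f h"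
    using cdual_represented_by_form[OF f] by blast
  have "continuous_on D (t x)"
    using continuous_on_subset[OF cdualD(2)[OF f] subset_UNIV]
    by (rule continuous_on_eq) (simp add: x)
  then have "x \<in> dom_A" using x(1) by (simp add: form_dom_def)
  moreover have "A x = f" by (rule form_op_eqI[OF f]) (simp add: x)
  ultimately show thesis by (rule that)
qed

lemma form_op_annihilator_zero:
  assumes "\<And>x. x \<in> dom_A \<Longrightarrow> A x e = 0"
  shows "e = 0"
proof (rule cdual_annihilator_zero)
  fix f :: "'a \<Rightarrow> complex" assume "f \<in> cdual"
  then obtain x where "x \<in> dom_A" "A x = f" by (rule form_op_surj)
  then show "f e = 0" using assms by blast
qed

lemma form_dom_subspace: "complex_subspace dom_A"
  unfolding complex_subspace_def
proof (intro conjI ballI allI)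
  have "continuous_on D (t 0)"
    using continuous_on_const[of D 0] by (rule continuous_on_eq) (simp add: t_zero_left)
  then show "0 \<in> dom_A" using D_zero by (simp add: form_dom_def)
next
  fix x y assume "x \<in> dom_A" "y \<in> dom_A"
  then have x: "x \<in> D" "continuous_on D (t x)" and y: "y \<in> D" "continuous_on D (t y)"
    by (auto simp: form_dom_def)
  have "continuous_on D (t (x + y))"
    using continuous_on_add[OF x(2) y(2)] by (rule continuous_on_eq) (simp add: t_add_left x y)
  then show "x + y \<in> dom_A" using D_add[OF x(1) y(1)] by (simp add: form_dom_def)
next
  fix c x assume "x \<in> dom_A"
  then have x: "x \<in> D" "continuous_on D (t x)" by (auto simp: form_dom_def)
  have "continuous_on D (t (c *\<^sub>C x))"
    using continuous_on_mult_left[OF x(2), of c]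
    by (rule continuous_on_eq) (simp add: t_scaleC_left x)
  then show "c *\<^sub>C x \<in> dom_A" using D_scaleC[OF x(1)] by (simp add: form_dom_def)
qed

lemma form_op_add: "x \<in> dom_A \<Longrightarrow> y \<in> dom_A \<Longrightarrow> A (x + y) = (\<lambda>z. A x z + A y z)"
  using complex_subspace_add[OF form_dom_subspace]
  by (intro cdual_eq_on_dense[OF form_op_cdual cdual_add[OF form_op_cdual form_op_cdual] D_dense])
    (auto simp: form_op_apply t_add_left form_dom_subset)

lemma form_op_scaleC: "x \<in> dom_A \<Longrightarrow> A (c *\<^sub>C x) = (\<lambda>z. c * A x z)"
  using complex_subspace_scaleC[OF form_dom_subspace]
  by (intro cdual_eq_on_dense[OF form_op_cdual cdual_cmult[OF form_op_cdual] D_dense])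
    (auto simp: form_op_apply t_scaleC_left form_dom_subset)

lemma form_op_conj_sym: "x \<in> dom_A \<Longrightarrow> y \<in> dom_A \<Longrightarrow> A x y = cnj (A y x)"
  by (simp add: form_op_apply form_dom_subset t_conj_sym[of y x])

text \<open>Density of the domain: the \<open>t\<close>-orthogonal projection \<open>w\<close> of \<open>y \<in> D\<close> onto the
  \<open>t\<close>-closure of the domain lies in its norm closure, and \<open>y - w\<close> is annihilated by every
  \<open>A x\<close>, hence by all of the dual.\<close>

lemma form_dom_dense: "closure dom_A = UNIV"
proof -
  have "D \<subseteq> closure dom_A"
  proof
    fix y assume y: "y \<in> D"
    have "- quad y \<le> quad x - 2 * Re (t y x)" if "x \<in> dom_A" for x
      using Re_t_le_quad[OF y form_dom_subset[OF that]] by simp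
    then interpret form_energy D t \<gamma> dom_A "t y" "- quad y"
      using form_dom_subspace form_dom_subset y
      by unfold_locales (auto simp: t_add_right t_scaleC_right)
    obtain w m where w: "w \<in> D" and m: "\<And>n. m n \<in> dom_A" and lim: "(\<lambda>n. quad (m n - w)) \<longlonglongrightarrow> 0"
      and wy: "\<And>h. h \<in> dom_A \<Longrightarrow> t w h = t y h"
      using representer_exists by blast
    have "m \<longlonglongrightarrow> w" using m form_dom_subset by (intro tendsto_if_quad_tendsto[OF _ w lim]) blast
    then have "w \<in> closure dom_A" using m unfolding closure_sequential by blast
    moreover have "y - w = 0"
    proof (rule form_op_annihilator_zero)
      fix x assume x: "x \<in> dom_A"
      have xD: "x \<in> D" using form_dom_subset[OF x] .
      have "A x (y - w) = cnj (t (y - w) x)"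
        using form_op_apply[OF x D_diff[OF y w]] t_conj_sym[OF D_diff[OF y w] xD] by simp
      also have "t (y - w) x = 0" using t_diff_left[OF y w xD] wy[OF x] by simp
      finally show "A x (y - w) = 0" by simp
    qed
    ultimately show "y \<in> closure dom_A" by simp
  qed
  then have "closure D \<subseteq> closure dom_A" by (simp add: closure_minimal)
  then show ?thesis using D_dense by auto
qed

lemma form_op_dd_operator: "dd_operator dom_A A"
  unfolding dd_operator_def
  using form_dom_subspace form_dom_dense form_op_cdual form_op_add form_op_scaleC by blast

lemma form_op_positive: "positive_op dom_A A"
  unfolding positive_op_def
  using form_op_apply form_dom_subset Im_t_diag quad_nonneg by (simp add: quad_def)

lemma adjoint_dom_form_op: "adjoint_dom dom_A A = dom_A"
proof
  show "dom_A \<subseteq> adjoint_dom dom_A A"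
  proof
    fix y assume y: "y \<in> dom_A"
    have "continuous_on dom_A (\<lambda>x. cnj (A y x))"
      using continuous_on_subset[OF cdualD(2)[OF form_op_cdual[OF y]] subset_UNIV]
      by (intro continuous_intros)
    then have "continuous_on dom_A (\<lambda>x. A x y)"
      by (rule continuous_on_eq) (simp add: form_op_conj_sym[OF _ y])
    then show "y \<in> adjoint_dom dom_A A" by (simp add: adjoint_dom_def)
  qed
next
  show "adjoint_dom dom_A A \<subseteq> dom_A"
  proof
    fix y assume "y \<in> adjoint_dom dom_A A"
    then have cont: "continuous_on dom_A (\<lambda>x. cnj (A x y))"
      by (intro continuous_intros) (simp add: adjoint_dom_def)
    obtain g where g: "g \<in> cdual" "\<And>x. x \<in> dom_A \<Longrightarrow> g x = cnj (A x y)"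
      by (rule cdual_extension_from_dense[OF form_dom_subspace form_dom_dense _ _ cont])
        (auto simp: form_op_add form_op_scaleC)
    obtain z where z: "z \<in> dom_A" "A z = g" using form_op_surj[OF g(1)] by blast
    have "y - z = 0"
    proof (rule form_op_annihilator_zero)
      fix x assume x: "x \<in> dom_A"
      have "A x y = A x z" using g(2)[OF x] z form_op_conj_sym[OF x z(1)] by simp
      then show "A x (y - z) = 0"
        using conj_linear_diff[OF cdualD(1)[OF form_op_cdual[OF x]]] by simp
    qed
    then show "y \<in> dom_A" using z(1) by simp
  qed
qed

lemma adjoint_op_form_op:
  assumes y: "y \<in> dom_A"
  shows "adjoint_op dom_A A y = A y"
  unfolding adjoint_op_def
proof (rule the_equality)
  show "A y \<in> cdual \<and> (\<forall>x\<in>dom_A. cnj (A y x) = A x y)"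
    using form_op_cdual[OF y] form_op_conj_sym[OF _ y] by simp
  show "w = A y" if "w \<in> cdual \<and> (\<forall>x\<in>dom_A. cnj (w x) = A x y)" for w
    using that form_op_cdual[OF y] form_op_conj_sym[OF _ y]
    by (intro cdual_eq_on_dense[OF _ _ form_dom_dense]) (auto simp: complex_eq_iff)
qed

lemma form_op_self_adjoint: "self_adjoint_op dom_A A"
  by (simp add: self_adjoint_op_def adjoint_dom_form_op adjoint_op_form_op)

end

theorem theorem1:
  fixes D :: "'a::{cnormed_vector, banach} set"
    and t :: "'a \<Rightarrow> 'a \<Rightarrow> complex"
    and \<gamma> :: real
  assumes "reflexive_space TYPE('a)"
    and "complex_subspace D"
    and "closure D = UNIV"
    and "sesquilinear_on D t"
    and "\<gamma> > 0"
    and "\<forall>x\<in>D. Im (t x x) = 0 \<and> \<gamma> * (norm x)\<^sup>2 \<le> Re (t x x)"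
    and "form_complete D t"
  shows "dd_operator (form_dom D t) (form_op D t) \<and>
         positive_op (form_dom D t) (form_op D t) \<and>
         self_adjoint_op (form_dom D t) (form_op D t)"
proof -
  interpret closed_coercive_form D t \<gamma>
    using assms(2-7) by unfold_locales
  show ?thesis using form_op_dd_operator form_op_positive form_op_self_adjoint by blast
qed

end
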